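(* Let $\sigma'\in\Sigma'$. Then there exists a generator $N'\in\mathrm{End}(H'_{\mathbb{Q}})$ of $\sigma'$ such that $\exp(N')\in\Gamma'$, and $\mathrm{Ad}(\gamma)\sigma'\in\Sigma'$ for every $\gamma\in\Gamma'$. Therefore $\Gamma'$ is strongly compatible with $\Sigma'$.
   Context: $H_{\mathbb{Z}}$ is a lattice with a unipotent automorphism $T$, $N=\log T$. $H'_{\mathbb{Z}}=H_{\mathbb{Z}}\oplus\mathbb{Z}e$ (an extension of $\mathbb{Z}$ by $H_{\mathbb{Z}}$, with $e$ mapping to $1$). $\Gamma'$ is the group of automorphisms of $H'_{\mathbb{Z}}$ of the form $\begin{pmatrix}T^n&b\\0&1\end{pmatrix}$ with $n\in\mathbb{Z}$, $b\in H_{\mathbb{Z}}$ (block form with respect to $H_{\mathbb{Z}}\oplus\mathbb{Z}e$). $\Sigma'$ is the set of cones $\mathbb{R}_{\ge0}N'$ where $N'\in\mathrm{End}(H'_{\mathbb{Q}})$, $N'|_{H_{\mathbb{Q}}}=N$, and $N'(e)=N(a)$ for some $a\in H_{\mathbb{Q}}$ with $(T-I)a\in H_{\mathbb{Z}}$. For $\gamma\in\Gamma'$, $\mathrm{Ad}(\gamma)\sigma'=\gamma\sigma'\gamma^{-1}$. Strong compatibility of $\Gamma'$ with $\Sigma'$ means: $\Sigma'$ is stable under $\mathrm{Ad}(\Gamma')$ and each cone of $\Sigma'$ is generated by elements $N'$ with $\exp(N')\in\Gamma'$. *)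

theory Defs
  imports "HOL-Analysis.Analysis"
begin

text \<open>The lattice H_Z is Z^n, realised inside H_R = real^'n (index type 'n);
  H'_Z = H_Z + Z e is realised inside real^('n option), where index None is the
  coordinate of the extra basis vector e and Some i the coordinates of H.
  Endomorphisms are real square matrices; rational endomorphisms are those with
  rational entries.\<close>

primrec mpow :: "real^'m^'m \<Rightarrow> nat \<Rightarrow> real^'m^'m" where
  "mpow A 0 = mat 1"
| "mpow A (Suc k) = A ** mpow A k"

definition ipow :: "real^'m^'m \<Rightarrow> int \<Rightarrow> real^'m^'m" where
  "ipow A n = (if 0 \<le> n then mpow A (nat n) else mpow (matrix_inv A) (nat (- n)))"

definition mexp :: "real^'m^'m \<Rightarrow> real^'m^'m" where
  "mexp A = (\<Sum>k. (1 / fact k) *\<^sub>R mpow A k)"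

definition mlog :: "real^'m^'m \<Rightarrow> real^'m^'m" where
  "mlog T = (\<Sum>k. ((-1) ^ k / real (Suc k)) *\<^sub>R mpow (T - mat 1) (Suc k))"

definition int_vec :: "real^'m \<Rightarrow> bool" where
  "int_vec v \<longleftrightarrow> (\<forall>i. v $ i \<in> \<int>)"

definition rat_vec :: "real^'m \<Rightarrow> bool" where
  "rat_vec v \<longleftrightarrow> (\<forall>i. v $ i \<in> \<rat>)"

definition int_mat :: "real^'m^'m \<Rightarrow> bool" where
  "int_mat A \<longleftrightarrow> (\<forall>i j. A $ i $ j \<in> \<int>)"

definition rat_mat :: "real^'m^'m \<Rightarrow> bool" where
  "rat_mat A \<longleftrightarrow> (\<forall>i j. A $ i $ j \<in> \<rat>)"

definition lattice_aut :: "real^'m^'m \<Rightarrow> bool" where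
  "lattice_aut T \<longleftrightarrow> int_mat T \<and> invertible T \<and> int_mat (matrix_inv T)"

definition unipotent :: "real^'m^'m \<Rightarrow> bool" where
  "unipotent T \<longleftrightarrow> (\<exists>k. mpow (T - mat 1) k = 0)"

text \<open>Block matrix [[A, b],[0, d]] w.r.t. H + Z e.\<close>
definition block :: "real^'n^'n \<Rightarrow> real^'n \<Rightarrow> real \<Rightarrow> real^('n option)^('n option)" where
  "block A b d = (\<chi> i j. case i of
       Some i' \<Rightarrow> (case j of Some j' \<Rightarrow> A $ i' $ j' | None \<Rightarrow> b $ i')
     | None \<Rightarrow> (case j of Some _ \<Rightarrow> 0 | None \<Rightarrow> d))"

definition Gamma' :: "real^'n^'n \<Rightarrow> (real^('n option)^('n option)) set" where
  "Gamma' T = {block (ipow T n) b 1 | n b. int_vec b}"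

definition ray :: "'a::real_vector \<Rightarrow> 'a set" where
  "ray N = {t *\<^sub>R N | t. 0 \<le> t}"

text \<open>N' with N'|H = N, N'(e) = N(a), a in H_Q with (T - I) a in H_Z.\<close>
definition Sigma' :: "real^'n^'n \<Rightarrow> (real^('n option)^('n option)) set set" where
  "Sigma' T = {ray (block (mlog T) (mlog T *v a) 0) | a.
                 rat_vec a \<and> int_vec ((T - mat 1) *v a)}"

definition Ad :: "real^'m^'m \<Rightarrow> (real^'m^'m) set \<Rightarrow> (real^'m^'m) set" where
  "Ad g \<sigma> = (\<lambda>X. g ** X ** matrix_inv g) ` \<sigma>"

definition cone_gen :: "'a::real_vector set \<Rightarrow> 'a set" where
  "cone_gen S = {\<Sum>x\<in>F. c x *\<^sub>R x | F c. finite F \<and> F \<subseteq> S \<and> (\<forall>x\<in>F. 0 \<le> c x)}"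

definition strongly_compatible ::
  "(real^'m^'m) set \<Rightarrow> (real^'m^'m) set set \<Rightarrow> bool" where
  "strongly_compatible G \<Sigma> \<longleftrightarrow>
     (\<forall>\<sigma>\<in>\<Sigma>. \<forall>g\<in>G. Ad g \<sigma> \<in> \<Sigma>) \<and>
     (\<forall>\<sigma>\<in>\<Sigma>. \<exists>S. S \<subseteq> {N. mexp N \<in> G} \<and> \<sigma> = cone_gen S)"

end

theory Submission
  imports Defs "HOL-Computational_Algebra.Formal_Power_Series"
begin

text \<open>Since \<open>T - 1\<close> is nilpotent, \<open>mlog T\<close> and every exponential series in sight are finite
  sums, and evaluating a formal power series at the nilpotent matrix \<open>T - 1\<close> (truncated past the
  nilpotency index) is a ring homomorphism. Hence the formal identity \<open>exp (ln (1 + X)) = 1 + X\<close>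
  gives \<open>mexp (mlog T) = T\<close>, and the rational coefficients of \<open>ln (1 + X)\<close> make \<open>N = mlog T\<close>
  rational. For \<open>N' = [[N, N a], [0, 0]]\<close> one computes \<open>mexp N' = [[T, (T - 1) a], [0, 1]]\<close>,
  an element of \<open>\<Gamma>'\<close> precisely because \<open>(T - 1) a\<close> is integral. Conjugating \<open>N'\<close> by
  \<open>[[T\<^sup>n, b], [0, 1]]\<close> yields the generator attached to \<open>T\<^sup>n a - b\<close>, because \<open>T\<^sup>n\<close> commutes with
  \<open>N\<close>; this vector again satisfies the integrality condition, so \<open>\<Sigma>'\<close> is \<open>Ad(\<Gamma>')\<close>-stable.\<close>

lemma matrix_add_rdistrib: "(A + B) ** (C::real^'m^'m) = A ** C + B ** C"
  by (simp add: vec_eq_iff matrix_matrix_mult_def sum.distrib distrib_right)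

lemma matrix_diff_ldistrib: "C ** (A - B) = C ** A - (C::real^'m^'m) ** B"
  by (simp add: vec_eq_iff matrix_matrix_mult_def sum_subtractf right_diff_distrib)

lemma matrix_diff_rdistrib: "(A - B) ** (C::real^'m^'m) = A ** C - B ** C"
  by (simp add: vec_eq_iff matrix_matrix_mult_def sum_subtractf left_diff_distrib)

lemma matrix_mult_sum_left: "(\<Sum>i\<in>I. f i) ** (B::real^'m^'m) = (\<Sum>i\<in>I. f i ** B)"
  by (induction I rule: infinite_finite_induct) (auto simp: matrix_add_rdistrib)

lemma matrix_mult_sum_right: "(B::real^'m^'m) ** (\<Sum>i\<in>I. f i) = (\<Sum>i\<in>I. B ** f i)"
  by (induction I rule: infinite_finite_induct) (auto simp: matrix_add_ldistrib)

lemma matrix_vector_mult_sum_left: "(\<Sum>k\<in>I. A k) *v (a::real^'m) = (\<Sum>k\<in>I. A k *v a)"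
  by (induction I rule: infinite_finite_induct) (auto simp: matrix_vector_mult_add_rdistrib)

lemma matrix_vector_mult_uminus_right: "A *v (- x) = - (A *v (x::real^'m))"
  by (simp add: vec_eq_iff matrix_vector_mult_def sum_negf)

lemma matrix_inv_unique:
  fixes A :: "real^'m^'m"
  assumes "A ** B = mat 1" "B ** A = mat 1"
  shows "matrix_inv A = B"
proof -
  have inv: "A ** matrix_inv A = mat 1 \<and> matrix_inv A ** A = mat 1"
    unfolding matrix_inv_def by (rule someI[of _ B]) (use assms in auto)
  have "matrix_inv A = matrix_inv A ** (A ** B)" using assms by simp
  also have "\<dots> = B" by (simp add: matrix_mul_assoc inv)
  finally show ?thesis .
qed

lemma
  fixes A :: "real^'m^'m"
  assumes "invertible A"
  shows matrix_inv_right: "A ** matrix_inv A = mat 1"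
    and matrix_inv_left: "matrix_inv A ** A = mat 1"
proof -
  obtain B where B: "A ** B = mat 1" "B ** A = mat 1" using assms invertible_def by blast
  then have "matrix_inv A = B" by (rule matrix_inv_unique)
  with B show "A ** matrix_inv A = mat 1" "matrix_inv A ** A = mat 1" by auto
qed

lemma mpow_add: "mpow A (i + j) = mpow A i ** mpow A j"
  by (induction i) (auto simp: matrix_mul_assoc)

lemma mpow_eq_0_mono: "mpow M K = 0 \<Longrightarrow> K \<le> i \<Longrightarrow> mpow M i = 0"
  by (metis le_add_diff_inverse mpow_add times0_left)

lemma mpow_commute: "C ** A = A ** (C::real^'m^'m) \<Longrightarrow> C ** mpow A k = mpow A k ** C"
  by (induction k) (auto simp: matrix_mul_assoc, metis matrix_mul_assoc)

lemma mpow_inverse: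
  assumes "A ** B = mat 1" "B ** A = (mat 1::real^'m^'m)"
  shows "mpow A k ** mpow B k = mat 1"
proof (induction k)
  case (Suc k)
  have "B ** mpow A k = mpow A k ** B"
    by (rule mpow_commute) (simp add: assms)
  then have "mpow A (Suc k) ** mpow B (Suc k) = A ** (B ** (mpow A k ** mpow B k))"
    by (simp add: matrix_mul_assoc)
  also have "\<dots> = mat 1" using Suc assms by (simp add: matrix_mul_assoc)
  finally show ?case .
qed simp

definition fps_mat_eval :: "nat \<Rightarrow> real^'m^'m \<Rightarrow> real fps \<Rightarrow> real^'m^'m" where
  "fps_mat_eval K M f = (\<Sum>i<K. fps_nth f i *\<^sub>R mpow M i)"

lemma fps_mat_eval_cong:
  "(\<And>i. i < K \<Longrightarrow> fps_nth f i = fps_nth g i) \<Longrightarrow> fps_mat_eval K M f = fps_mat_eval K M g"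
  by (simp add: fps_mat_eval_def)

lemma fps_mat_eval_eq_0: "(\<And>i. i < K \<Longrightarrow> fps_nth f i = 0) \<Longrightarrow> fps_mat_eval K M f = 0"
  by (simp add: fps_mat_eval_def)

lemma fps_mat_eval_add: "fps_mat_eval K M (f + g) = fps_mat_eval K M f + fps_mat_eval K M g"
  by (simp add: fps_mat_eval_def scaleR_add_left sum.distrib)

lemma fps_mat_eval_sum: "fps_mat_eval K M (\<Sum>j\<in>J. h j) = (\<Sum>j\<in>J. fps_mat_eval K M (h j))"
  by (induction J rule: infinite_finite_induct)
    (auto simp: fps_mat_eval_add, simp_all add: fps_mat_eval_def)

lemma fps_mat_eval_const_mult: "fps_mat_eval K M (fps_const c * f) = c *\<^sub>R fps_mat_eval K M f"
  by (simp add: fps_mat_eval_def scaleR_sum_right)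

lemma fps_mat_eval_1:
  assumes "0 < K" shows "fps_mat_eval K M 1 = mat 1"
proof -
  have "fps_mat_eval K M 1 = (\<Sum>i\<in>{0}. fps_nth (1::real fps) i *\<^sub>R mpow M i)"
    unfolding fps_mat_eval_def using assms by (intro sum.mono_neutral_right) auto
  then show ?thesis by simp
qed

lemma fps_mat_eval_X:
  assumes "1 < K" shows "fps_mat_eval K M fps_X = M"
proof -
  have "fps_mat_eval K M fps_X = (\<Sum>i\<in>{1}. fps_nth (fps_X::real fps) i *\<^sub>R mpow M i)"
    unfolding fps_mat_eval_def using assms by (intro sum.mono_neutral_right) (auto simp: fps_X_nth)
  then show ?thesis by simp
qed

lemma fps_mat_eval_mult:
  assumes nil: "mpow M K = 0"
  shows "fps_mat_eval K M (f * g) = fps_mat_eval K M f ** fps_mat_eval K M g"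
proof -
  define G where "G = (\<lambda>(i,j). (fps_nth f i * fps_nth g j) *\<^sub>R mpow M (i+j))"
  have "fps_mat_eval K M f ** fps_mat_eval K M g = (\<Sum>p\<in>{..<K}\<times>{..<K}. G p)"
    unfolding fps_mat_eval_def matrix_mult_sum_left matrix_mult_sum_right
    by (subst sum.swap)
      (simp add: sum.cartesian_product G_def scalar_matrix_assoc[symmetric] matrix_scalar_ac
        scaleR_sum_right mpow_add mult.commute)
  also have "\<dots> = (\<Sum>p\<in>{(i,j). i + j < K}. G p)"
    by (rule sum.mono_neutral_right) (auto simp: G_def, metis nil mpow_eq_0_mono not_less)
  also have "\<dots> = (\<Sum>p\<in>(SIGMA n:{..<K}. {0..n}). G (snd p, fst p - snd p))"
    by (rule sum.reindex_bij_witness[where j="\<lambda>(i,j). (i+j, i)" and i="\<lambda>(n,i). (i, n - i)"]) auto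
  also have "\<dots> = (\<Sum>n<K. \<Sum>i=0..n. (fps_nth f i * fps_nth g (n-i)) *\<^sub>R mpow M n)"
    by (subst sum.Sigma) (auto simp: G_def split_def intro!: sum.cong)
  also have "\<dots> = fps_mat_eval K M (f * g)"
    by (simp add: fps_mat_eval_def fps_mult_nth scaleR_sum_left)
  finally show ?thesis ..
qed

lemma fps_mat_eval_power:
  assumes "mpow M K = 0" "0 < K"
  shows "fps_mat_eval K M (f ^ k) = mpow (fps_mat_eval K M f) k"
  by (induction k) (auto simp: fps_mat_eval_1 assms fps_mat_eval_mult)

lemma fps_mat_eval_commute:
  "C ** M = M ** (C::real^'m^'m) \<Longrightarrow> C ** fps_mat_eval K M f = fps_mat_eval K M f ** C"
  unfolding fps_mat_eval_def matrix_mult_sum_left matrix_mult_sum_right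
  by (simp add: scalar_matrix_assoc[symmetric] matrix_scalar_ac mpow_commute)

lemma mlog_eq_fps_mat_eval:
  assumes nil: "mpow (T - mat 1) K = 0"
  shows "mlog T = fps_mat_eval (Suc (Suc K)) (T - mat 1) (fps_ln 1)"
proof -
  have "mlog T = (\<Sum>k<Suc K. ((-1) ^ k / real (Suc k)) *\<^sub>R mpow (T - mat 1) (Suc k))"
    unfolding mlog_def by (rule suminf_finite) (auto simp: mpow_eq_0_mono[OF nil])
  then show ?thesis
    unfolding fps_mat_eval_def sum.lessThan_Suc_shift[of _ "Suc K"] by (simp add: fps_ln_nth)
qed

lemma
  assumes nil: "mpow (T - mat 1) K = 0"
  shows mpow_mlog_eq_0: "mpow (mlog T) (Suc (Suc K)) = 0"
    and mexp_mlog: "mexp (mlog T) = T"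
proof -
  let ?M = "T - mat 1"
  let ?K = "Suc (Suc K)"
  let ?ev = "fps_mat_eval ?K ?M"
  define L where "L = (fps_ln 1 :: real fps)"
  have L0: "fps_nth L 0 = 0" by (simp add: L_def)
  have nil': "mpow ?M ?K = 0" using mpow_eq_0_mono[OF nil] by simp
  have pow_L: "mpow (mlog T) k = ?ev (L ^ k)" for k
    using fps_mat_eval_power[OF nil', of L k] mlog_eq_fps_mat_eval[OF nil] L_def by simp
  have pow_L_eq_0: "mpow (mlog T) k = 0" if "?K \<le> k" for k
    unfolding pow_L by (rule fps_mat_eval_eq_0) (use startsby_zero_power_prefix[OF L0] that in auto)
  then show "mpow (mlog T) ?K = 0" by blast
  have "mexp (mlog T) = (\<Sum>k<?K. (1 / fact k) *\<^sub>R mpow (mlog T) k)"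
    unfolding mexp_def by (rule suminf_finite) (auto simp: pow_L_eq_0)
  also have "\<dots> = ?ev (\<Sum>k<?K. fps_const (1 / fact k) * L ^ k)"
    by (simp only: fps_mat_eval_sum fps_mat_eval_const_mult pow_L)
  also have "\<dots> = ?ev (fps_exp 1 oo L)"
  proof (rule fps_mat_eval_cong)
    fix n assume n: "n < ?K"
    have "fps_nth (\<Sum>k<?K. fps_const (1 / fact k) * L ^ k) n
        = (\<Sum>k<?K. (1 / fact k) * fps_nth (L ^ k) n)"
      by (simp add: fps_sum_nth)
    also have "\<dots> = (\<Sum>k\<in>{0..n}. (1 / fact k) * fps_nth (L ^ k) n)"
      using n startsby_zero_power_prefix[OF L0] by (intro sum.mono_neutral_right) auto
    finally show "fps_nth (\<Sum>k<?K. fps_const (1 / fact k) * L ^ k) n = fps_nth (fps_exp 1 oo L) n"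
      by (simp add: fps_compose_nth)
  qed
  also have "fps_exp 1 oo L = fps_X + 1"
  proof -
    have "(fps_exp (1::real) - 1) oo L = fps_X"
      unfolding L_def fps_ln_fps_exp_inv[of "1::real", simplified]
      using fps_inv_fps_exp_compose(2)[of "1::real"] by simp
    then show ?thesis by (simp add: fps_compose_sub_distrib algebra_simps)
  qed
  also have "?ev (fps_X + 1) = T"
    by (simp add: fps_mat_eval_add fps_mat_eval_X fps_mat_eval_1)
  finally show "mexp (mlog T) = T" .
qed

lemma int_mat_mult: "int_mat A \<Longrightarrow> int_mat B \<Longrightarrow> int_mat (A ** (B::real^'m^'m))"
  by (auto simp: int_mat_def matrix_matrix_mult_def)

lemma int_mat_mat_1: "int_mat (mat 1 :: real^'m^'m)"
  by (auto simp: int_mat_def mat_def)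

lemma int_mat_mpow: "int_mat A \<Longrightarrow> int_mat (mpow A k)"
  by (induction k) (auto simp: int_mat_mat_1 int_mat_mult)

lemma int_mat_diff: "int_mat A \<Longrightarrow> int_mat B \<Longrightarrow> int_mat (A - (B::real^'m^'m))"
  by (auto simp: int_mat_def)

lemma int_vec_matrix_vector_mult: "int_mat A \<Longrightarrow> int_vec v \<Longrightarrow> int_vec (A *v (v::real^'m))"
  by (auto simp: int_mat_def int_vec_def matrix_vector_mult_def)

lemma rat_vec_matrix_vector_mult: "rat_mat A \<Longrightarrow> rat_vec v \<Longrightarrow> rat_vec (A *v (v::real^'m))"
  by (auto simp: rat_mat_def rat_vec_def matrix_vector_mult_def intro!: Rats_sum Rats_mult)

lemma int_mat_imp_rat_mat: "int_mat A \<Longrightarrow> rat_mat A"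
  using Ints_subset_Rats by (auto simp: int_mat_def rat_mat_def)

lemma int_vec_imp_rat_vec: "int_vec a \<Longrightarrow> rat_vec a"
  using Ints_subset_Rats by (auto simp: int_vec_def rat_vec_def)

lemma int_vec_diff: "int_vec a \<Longrightarrow> int_vec b \<Longrightarrow> int_vec (a - (b::real^'m))"
  by (auto simp: int_vec_def)

lemma rat_vec_diff: "rat_vec a \<Longrightarrow> rat_vec b \<Longrightarrow> rat_vec (a - (b::real^'m))"
  by (auto simp: rat_vec_def)

lemma rat_mat_fps_mat_eval:
  assumes "int_mat M" "\<And>i. fps_nth f i \<in> \<rat>"
  shows "rat_mat (fps_mat_eval K M f)"
proof -
  have "int_mat (mpow M i)" for i using assms(1) int_mat_mpow by blast
  with assms(2) show ?thesis using Ints_subset_Rats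
    by (auto simp: rat_mat_def int_mat_def fps_mat_eval_def sum_component intro!: Rats_sum Rats_mult)
qed

lemma rat_mat_mlog:
  assumes "int_mat T" "unipotent T"
  shows "rat_mat (mlog T)"
proof -
  obtain K where nil: "mpow (T - mat 1) K = 0" using assms(2) unfolding unipotent_def by blast
  show ?thesis
    unfolding mlog_eq_fps_mat_eval[OF nil]
    by (intro rat_mat_fps_mat_eval int_mat_diff int_mat_mat_1 assms(1))
      (auto simp: fps_ln_nth intro!: Rats_divide Rats_power Rats_minus_iff[THEN iffD2])
qed

lemma
  fixes T :: "real^'m^'m"
  assumes "lattice_aut T"
  shows ipow_inverse: "ipow T n ** ipow T (-n) = mat 1"
    and int_mat_ipow: "int_mat (ipow T n)"
    and ipow_commute_diff_1: "ipow T n ** (T - mat 1) = (T - mat 1) ** ipow T n"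
proof -
  let ?Ti = "matrix_inv T"
  have inv: "T ** ?Ti = mat 1" "?Ti ** T = mat 1" "int_mat T" "int_mat ?Ti"
    using assms matrix_inv_left matrix_inv_right unfolding lattice_aut_def by auto
  show "ipow T n ** ipow T (-n) = mat 1"
    using mpow_inverse[OF inv(1,2)] mpow_inverse[OF inv(2,1)] by (auto simp: ipow_def)
  show "int_mat (ipow T n)" using int_mat_mpow inv by (auto simp: ipow_def)
  have "(T - mat 1) ** mpow T k = mpow T k ** (T - mat 1)"
    "(T - mat 1) ** mpow ?Ti k = mpow ?Ti k ** (T - mat 1)" for k
    by (rule mpow_commute, simp add: matrix_diff_ldistrib matrix_diff_rdistrib inv)+
  then show "ipow T n ** (T - mat 1) = (T - mat 1) ** ipow T n"
    by (auto simp: ipow_def)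
qed

lemma block_nth: "block A b d $ i $ j = (case i of
       Some i' \<Rightarrow> (case j of Some j' \<Rightarrow> A $ i' $ j' | None \<Rightarrow> b $ i')
     | None \<Rightarrow> (case j of Some _ \<Rightarrow> 0 | None \<Rightarrow> d))"
  by (simp add: block_def)

lemma sum_UNIV_option:
  "(\<Sum>i\<in>(UNIV::'a::finite option set). f i) = f None + (\<Sum>i\<in>UNIV. f (Some i))"
  unfolding UNIV_option_conv by (subst sum.insert) (auto simp: sum.reindex)

lemma block_mult: "block A b d ** block A' b' d' = block (A ** A') (A *v b' + d' *\<^sub>R b) (d * d')"
  by (auto simp: vec_eq_iff matrix_matrix_mult_def matrix_vector_mult_def block_nth sum_UNIV_option
      split: option.splits)

lemma block_mat_1: "block (mat 1) 0 1 = mat 1"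
  by (auto simp: vec_eq_iff block_nth mat_def split: option.splits)

lemma block_0: "block 0 0 0 = 0"
  by (auto simp: vec_eq_iff block_nth split: option.splits)

lemma block_add: "block A b d + block A' b' d' = block (A + A') (b + b') (d + d')"
  by (auto simp: vec_eq_iff block_nth split: option.splits)

lemma scaleR_block: "c *\<^sub>R block A b d = block (c *\<^sub>R A) (c *\<^sub>R b) (c * d)"
  by (auto simp: vec_eq_iff block_nth split: option.splits)

lemma sum_block:
  "(\<Sum>k\<in>I. block (A k) (b k) (d k)) = block (\<Sum>k\<in>I. A k) (\<Sum>k\<in>I. b k) (\<Sum>k\<in>I. d k)"
  by (induction I rule: infinite_finite_induct) (auto simp: block_0 block_add)

lemma rat_mat_block: "rat_mat A \<Longrightarrow> rat_vec b \<Longrightarrow> d \<in> \<rat> \<Longrightarrow> rat_mat (block A b d)"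
  by (auto simp: rat_mat_def rat_vec_def block_nth split: option.splits)

lemma matrix_inv_block:
  assumes "A ** B = mat 1" "B ** A = mat 1"
  shows "matrix_inv (block A b 1) = block B (- (B *v b)) 1"
  by (rule matrix_inv_unique)
    (simp_all add: block_mult assms matrix_vector_mul_assoc block_mat_1 matrix_vector_mult_uminus_right)

lemma mpow_block:
  "mpow (block N (N *v a) 0) k =
     block (mpow N k) (mpow N k *v a - (if k = 0 then a else 0)) (if k = 0 then 1 else 0)"
  by (induction k) (simp_all add: block_mat_1 block_mult matrix_vector_mul_assoc algebra_simps)

lemma mexp_block:
  assumes nil: "mpow N K = 0"
  shows "mexp (block N (N *v a) 0) = block (mexp N) (mexp N *v a - a) 1"
proof -
  let ?c = "\<lambda>k. 1 / fact k :: real"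
  have "(\<Sum>k<Suc K. ?c k *\<^sub>R (if k = 0 then a else 0)) = a"
    "(\<Sum>k<Suc K. ?c k * (if k = 0 then 1 else 0)) = 1"
    by (subst sum.lessThan_Suc_shift, simp)+
  moreover have "mexp N = (\<Sum>k<Suc K. ?c k *\<^sub>R mpow N k)"
    unfolding mexp_def by (rule suminf_finite) (auto simp: mpow_eq_0_mono[OF nil])
  moreover have "mexp (block N (N *v a) 0) = (\<Sum>k<Suc K. ?c k *\<^sub>R mpow (block N (N *v a) 0) k)"
    unfolding mexp_def by (rule suminf_finite) (auto simp: mpow_block mpow_eq_0_mono[OF nil] block_0)
  ultimately show ?thesis
    by (simp add: mpow_block scaleR_block sum_block matrix_vector_mult_sum_left
        scaleR_matrix_vector_assoc algebra_simps sum_subtractf)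
qed

lemma Ad_ray: "Ad g (ray X) = ray (g ** X ** matrix_inv g)"
  unfolding Ad_def ray_def
proof safe
  fix t :: real assume "0 \<le> t"
  then show "t *\<^sub>R (g ** X ** matrix_inv g) \<in> (\<lambda>X. g ** X ** matrix_inv g) ` {t *\<^sub>R X |t. 0 \<le> t}"
    by (intro image_eqI[of _ _ "t *\<^sub>R X"]) (auto simp: scalar_matrix_assoc[symmetric] matrix_scalar_ac)
qed (auto simp: scalar_matrix_assoc[symmetric] matrix_scalar_ac)

lemma cone_gen_singleton: "cone_gen {x} = ray x"
proof
  show "cone_gen {x} \<subseteq> ray x"
  proof
    fix y assume "y \<in> cone_gen {x}"
    then obtain F c where y: "y = (\<Sum>x\<in>F. c x *\<^sub>R x)" "F \<subseteq> {x}" "\<forall>x\<in>F. 0 \<le> c x"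
      unfolding cone_gen_def by blast
    then consider "F = {}" | "F = {x}" by blast
    then show "y \<in> ray x"
      by cases (use y in \<open>auto simp: ray_def intro: exI[of _ 0]\<close>)
  qed
  show "ray x \<subseteq> cone_gen {x}"
    unfolding ray_def cone_gen_def by (auto intro!: exI[of _ "{x}"])
qed

definition Sigma'_gen :: "real^'n^'n \<Rightarrow> real^'n \<Rightarrow> real^('n option)^('n option)" where
  "Sigma'_gen T a = block (mlog T) (mlog T *v a) 0"

lemma Sigma'_eq: "Sigma' T = {ray (Sigma'_gen T a) | a. rat_vec a \<and> int_vec ((T - mat 1) *v a)}"
  by (simp add: Sigma'_def Sigma'_gen_def)

lemma rat_mat_Sigma'_gen: "int_mat T \<Longrightarrow> unipotent T \<Longrightarrow> rat_vec a \<Longrightarrow> rat_mat (Sigma'_gen T a)"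
  unfolding Sigma'_gen_def by (intro rat_mat_block rat_vec_matrix_vector_mult rat_mat_mlog) auto

lemma mexp_Sigma'_gen:
  assumes "unipotent T"
  shows "mexp (Sigma'_gen T a) = block (ipow T 1) ((T - mat 1) *v a) 1"
proof -
  obtain K where "mpow (T - mat 1) K = 0" using assms unfolding unipotent_def by blast
  then show ?thesis
    unfolding Sigma'_gen_def
    by (simp add: mexp_block[OF mpow_mlog_eq_0] mexp_mlog ipow_def matrix_vector_mult_diff_rdistrib)
qed

lemma Sigma'_gen_conj:
  assumes T: "lattice_aut T" "unipotent T"
  shows "block (ipow T n) b 1 ** Sigma'_gen T a ** matrix_inv (block (ipow T n) b 1)
           = Sigma'_gen T (ipow T n *v a - b)"
proof -
  obtain K where nil: "mpow (T - mat 1) K = 0" using T(2) unfolding unipotent_def by blast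
  define U V N where "U = ipow T n" and "V = ipow T (-n)" and "N = mlog T"
  have UV: "U ** V = mat 1" "V ** U = mat 1"
    using ipow_inverse[OF T(1), of n] ipow_inverse[OF T(1), of "-n"] U_def V_def by auto
  have UN: "U ** N = N ** U"
    unfolding N_def mlog_eq_fps_mat_eval[OF nil] U_def
    by (rule fps_mat_eval_commute[OF ipow_commute_diff_1[OF T(1)]])
  then have UNV: "U ** N ** V = N" by (metis UV(1) matrix_mul_assoc matrix_mul_rid)
  then have "(U ** N) *v (- (V *v b)) = - (N *v b)"
    by (metis matrix_mul_assoc matrix_vector_mul_assoc matrix_vector_mult_uminus_right)
  moreover have "U *v (N *v a) = N *v (U *v a)" by (simp add: matrix_vector_mul_assoc UN)
  ultimately show ?thesis
    unfolding Sigma'_gen_def N_def[symmetric] U_def[symmetric] matrix_inv_block[OF UV] block_mult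
    by (simp add: UNV matrix_vector_mult_diff_distrib)
qed

lemma Ad_Gamma'_Sigma'_gen:
  assumes T: "lattice_aut T" "unipotent T"
    and a: "rat_vec a" "int_vec ((T - mat 1) *v a)"
    and g: "\<gamma> \<in> Gamma' T"
  shows "Ad \<gamma> (ray (Sigma'_gen T a)) \<in> Sigma' T"
proof -
  obtain n b where \<gamma>: "\<gamma> = block (ipow T n) b 1" and b: "int_vec b"
    using g unfolding Gamma'_def by blast
  let ?U = "ipow T n" and ?M = "T - mat 1"
  have iU: "int_mat ?U" and iM: "int_mat ?M"
    using int_mat_ipow[OF T(1)] T(1) int_mat_diff int_mat_mat_1 unfolding lattice_aut_def by auto
  have "rat_vec (?U *v a - b)"
    using iU a b
    by (simp add: rat_vec_diff rat_vec_matrix_vector_mult int_vec_imp_rat_vec int_mat_imp_rat_mat)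
  moreover have "?M *v (?U *v a - b) = ?U *v (?M *v a) - ?M *v b"
    by (simp add: matrix_vector_mul_assoc ipow_commute_diff_1[OF T(1)] matrix_vector_mult_diff_distrib)
  then have "int_vec (?M *v (?U *v a - b))"
    using iU iM a b by (simp add: int_vec_diff int_vec_matrix_vector_mult)
  ultimately show ?thesis
    unfolding \<gamma> Ad_ray Sigma'_gen_conj[OF T] Sigma'_eq by blast
qed

theorem mainTheorem2:
  fixes T :: "real^'n^'n"
  assumes "lattice_aut T" and "unipotent T"
  shows "(\<forall>\<sigma>'\<in>Sigma' T.
            (\<exists>N'. rat_mat N' \<and> \<sigma>' = ray N' \<and> mexp N' \<in> Gamma' T) \<and>
            (\<forall>\<gamma>\<in>Gamma' T. Ad \<gamma> \<sigma>' \<in> Sigma' T))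
         \<and> strongly_compatible (Gamma' T) (Sigma' T)"
proof -
  have cone: "(\<exists>N'. rat_mat N' \<and> \<sigma>' = ray N' \<and> mexp N' \<in> Gamma' T) \<and>
            (\<forall>\<gamma>\<in>Gamma' T. Ad \<gamma> \<sigma>' \<in> Sigma' T)" if \<sigma>'_in: "\<sigma>' \<in> Sigma' T" for \<sigma>'
  proof -
    obtain a where \<sigma>': "\<sigma>' = ray (Sigma'_gen T a)"
      and a: "rat_vec a" "int_vec ((T - mat 1) *v a)"
      using \<sigma>'_in unfolding Sigma'_eq by blast
    have "mexp (Sigma'_gen T a) \<in> Gamma' T"
      unfolding mexp_Sigma'_gen[OF assms(2)] Gamma'_def using a(2) by blast
    moreover have "rat_mat (Sigma'_gen T a)"
      using assms a by (intro rat_mat_Sigma'_gen) (auto simp: lattice_aut_def)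
    ultimately show ?thesis using \<sigma>' Ad_Gamma'_Sigma'_gen[OF assms a] by blast
  qed
  moreover have "\<exists>S. S \<subseteq> {N. mexp N \<in> Gamma' T} \<and> \<sigma>' = cone_gen S" if "\<sigma>' \<in> Sigma' T" for \<sigma>'
    using cone[OF that] by (metis cone_gen_singleton empty_subsetI insert_subset mem_Collect_eq)
  ultimately show ?thesis unfolding strongly_compatible_def by blast
qed

end
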